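(* Let $G=(V,E)$ be a finite simple graph of order $n$, let $T=n-1$, and let $k$ be an integer with $k\leq\mathrm{PT}(G)$. If $(x,y,z)$ is an optimal solution of the integer program with the constraints of the Time Step Model $\mathrm{TSM}(G,T)$ together with the additional constraint $\sum_{t\in[T]}z^t\geq k$, and objective "minimize $\sum_{v\in V}x^0_v+\frac{1}{2T}\sum_{t\in[T]}z^t$", then $C=\{v\in V\colon x^0_v=1\}$ is a minimum zero forcing set of $G$ with $\mathrm{pt}(G,C)=\sum_{t\in[T]}z^t\geq k$. Furthermore, there is no minimum zero forcing set $\hat C$ of $G$ with $k<\mathrm{pt}(G,\hat C)<\mathrm{pt}(G,C)$.
   Context: Zero forcing: under the standard color change rule a filled vertex $u$ can force a non-filled vertex $v$ if $v$ is the only non-filled neighbor of $u$; $C\subseteq V$ is a zero forcing set if, starting with $C$ filled and repeatedly forcing, all of $V$ becomes filled; a minimum zero forcing set is one of minimum size. The propagation time $\mathrm{pt}(G,C)$ is the smallest $t^*$ such that, starting from $C^{[0]}=C$ and setting $C^{[t]}=C^{[t-1]}\cup\{v\notin C^{[t-1]}\colon$ some $u\in C^{[t-1]}$ has $v$ as its only neighbor outside $C^{[t-1]}\}$, one has $C^{[t^*]}=V$ ($\infty$ if $C$ is not a zero forcing set). $\mathrm{PT}(G)=\max\{\mathrm{pt}(G,C)\colon C$ a minimum zero forcing set$\}$. $N(u)$ is the neighborhood of $u$ and $d(u)=|N(u)|$. Time Step Model constraints: $A$ is the set of arcs containing $(u,v)$ and $(v,u)$ for each edge $\{u,v\}$,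 $[T]=\{1,\dots,T\}$. Binary variables $x^t_v$ ($v\in V$, $t\in\{0,\dots,T\}$), $y^t_a$ ($a\in A$, $t\in[T]$), $z^t$ ($t\in[T]$), with constraints: (1) $x^0_v+\sum_{t\in[T]}\sum_{a=(u,v)\in A}y^t_a=1$ for all $v$; (2) $y^t_a\leq x^{t-1}_u$ for all $a=(u,v)\in A$, $t\in[T]$; (3) $y^t_a\leq x^{t-1}_w$ for all $a=(u,v)\in A$, $w\in N(u)\setminus\{v\}$, $t\in[T]$; (4) $x^t_v=x^{t-1}_v+\sum_{a=(u,v)\in A}y^t_a$ for all $v$, $t\in[T]$; (5) $x^{t-1}_u-x^{t-1}_v+\sum_{w\in N(u)\setminus\{v\}}x^{t-1}_w\leq\sum_{a=(w,v)\in A}y^t_a+d(u)-1$ for all $(u,v)\in A$, $t\in[T]$; (6) $\frac1n\sum_{v\in V}(x^t_v-x^{t-1}_v)-z^t\leq0$ for all $t\in[T]$; (7) $z^t-\sum_{v\in V}(x^t_v-x^{t-1}_v)\leq 0$ for all $t\in[T]$. *)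

theory Defs
  imports Complex_Main "HOL-Library.Extended_Nat"
begin

definition simple_graph :: "'a set \<Rightarrow> ('a \<Rightarrow> 'a \<Rightarrow> bool) \<Rightarrow> bool" where
  "simple_graph V E \<longleftrightarrow> finite V \<and> (\<forall>u v. E u v \<longrightarrow> u \<in> V \<and> v \<in> V)
     \<and> (\<forall>u v. E u v \<longrightarrow> E v u) \<and> (\<forall>u. \<not> E u u)"

definition nbhd :: "'a set \<Rightarrow> ('a \<Rightarrow> 'a \<Rightarrow> bool) \<Rightarrow> 'a \<Rightarrow> 'a set" where
  "nbhd V E u = {w \<in> V. E u w}"

definition deg :: "'a set \<Rightarrow> ('a \<Rightarrow> 'a \<Rightarrow> bool) \<Rightarrow> 'a \<Rightarrow> nat" where
  "deg V E u = card (nbhd V E u)"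

inductive_set filled :: "'a set \<Rightarrow> ('a \<Rightarrow> 'a \<Rightarrow> bool) \<Rightarrow> 'a set \<Rightarrow> 'a set"
  for V E C where
  init: "v \<in> C \<Longrightarrow> v \<in> filled V E C"
| force: "u \<in> filled V E C \<Longrightarrow> v \<in> nbhd V E u \<Longrightarrow>
          (\<forall>w \<in> nbhd V E u - {v}. w \<in> filled V E C) \<Longrightarrow> v \<in> filled V E C"

definition zero_forcing_set :: "'a set \<Rightarrow> ('a \<Rightarrow> 'a \<Rightarrow> bool) \<Rightarrow> 'a set \<Rightarrow> bool" where
  "zero_forcing_set V E C \<longleftrightarrow> C \<subseteq> V \<and> filled V E C = V"

definition min_zero_forcing_set :: "'a set \<Rightarrow> ('a \<Rightarrow> 'a \<Rightarrow> bool) \<Rightarrow> 'a set \<Rightarrow> bool" where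
  "min_zero_forcing_set V E C \<longleftrightarrow> zero_forcing_set V E C \<and>
     (\<forall>D. zero_forcing_set V E D \<longrightarrow> card C \<le> card D)"

definition prop_step :: "'a set \<Rightarrow> ('a \<Rightarrow> 'a \<Rightarrow> bool) \<Rightarrow> 'a set \<Rightarrow> 'a set" where
  "prop_step V E S = S \<union> {v. v \<notin> S \<and> (\<exists>u \<in> S. v \<in> nbhd V E u \<and> nbhd V E u - S = {v})}"

definition prop_time :: "'a set \<Rightarrow> ('a \<Rightarrow> 'a \<Rightarrow> bool) \<Rightarrow> 'a set \<Rightarrow> enat" where
  "prop_time V E C = (if \<exists>t. (prop_step V E ^^ t) C = V
     then enat (LEAST t. (prop_step V E ^^ t) C = V) else \<infinity>)"

definition PT :: "'a set \<Rightarrow> ('a \<Rightarrow> 'a \<Rightarrow> bool) \<Rightarrow> enat" where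
  "PT V E = Sup (prop_time V E ` {C. min_zero_forcing_set V E C})"

definition TSM :: "'a set \<Rightarrow> ('a \<Rightarrow> 'a \<Rightarrow> bool) \<Rightarrow> nat \<Rightarrow>
    ('a \<Rightarrow> nat \<Rightarrow> real) \<Rightarrow> ('a \<times> 'a \<Rightarrow> nat \<Rightarrow> real) \<Rightarrow> (nat \<Rightarrow> real) \<Rightarrow> bool" where
  "TSM V E T x y z \<longleftrightarrow>
     (\<forall>v \<in> V. \<forall>t \<le> T. x v t \<in> {0, 1}) \<and>
     (\<forall>u v. E u v \<longrightarrow> (\<forall>t \<in> {1..T}. y (u, v) t \<in> {0, 1})) \<and>
     (\<forall>t \<in> {1..T}. z t \<in> {0, 1}) \<and>
     (\<forall>v \<in> V. x v 0 + (\<Sum>t\<in>{1..T}. \<Sum>u\<in>nbhd V E v. y (u, v) t) = 1) \<and>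
     (\<forall>u v. E u v \<longrightarrow> (\<forall>t \<in> {1..T}. y (u, v) t \<le> x u (t - 1))) \<and>
     (\<forall>u v. E u v \<longrightarrow> (\<forall>w \<in> nbhd V E u - {v}. \<forall>t \<in> {1..T}. y (u, v) t \<le> x w (t - 1))) \<and>
     (\<forall>v \<in> V. \<forall>t \<in> {1..T}. x v t = x v (t - 1) + (\<Sum>u\<in>nbhd V E v. y (u, v) t)) \<and>
     (\<forall>u v. E u v \<longrightarrow> (\<forall>t \<in> {1..T}.
        x u (t - 1) - x v (t - 1) + (\<Sum>w\<in>nbhd V E u - {v}. x w (t - 1))
          \<le> (\<Sum>w\<in>nbhd V E v. y (w, v) t) + real (deg V E u) - 1)) \<and>
     (\<forall>t \<in> {1..T}. (1 / real (card V)) * (\<Sum>v\<in>V. x v t - x v (t - 1)) - z t \<le> 0) \<and>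
     (\<forall>t \<in> {1..T}. z t - (\<Sum>v\<in>V. x v t - x v (t - 1)) \<le> 0)"

definition TSM_k :: "'a set \<Rightarrow> ('a \<Rightarrow> 'a \<Rightarrow> bool) \<Rightarrow> nat \<Rightarrow> int \<Rightarrow>
    ('a \<Rightarrow> nat \<Rightarrow> real) \<Rightarrow> ('a \<times> 'a \<Rightarrow> nat \<Rightarrow> real) \<Rightarrow> (nat \<Rightarrow> real) \<Rightarrow> bool" where
  "TSM_k V E T k x y z \<longleftrightarrow> TSM V E T x y z \<and> (\<Sum>t\<in>{1..T}. z t) \<ge> real_of_int k"

definition TSM_obj :: "'a set \<Rightarrow> nat \<Rightarrow> ('a \<Rightarrow> nat \<Rightarrow> real) \<Rightarrow> (nat \<Rightarrow> real) \<Rightarrow> real" where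
  "TSM_obj V T x z = (\<Sum>v\<in>V. x v 0) + (1 / (2 * real T)) * (\<Sum>t\<in>{1..T}. z t)"

end

(*
  The constraints of TSM(G,T) say that x^t is the indicator of C^[t], the set filled after t
  parallel propagation steps from C = {v. x^0_v = 1}, that y^t marks a forcing vertex of every
  vertex filled at step t, and that z^t = 1 iff step t fills some vertex; constraint (1) demands
  C^[T] = V. Hence a feasible solution is a zero forcing set C with sum_t z^t = pt(G,C).
  Conversely the trace of the propagation from any zero forcing set is feasible, because
  pt(G,C) <= n - 1 = T. In the objective |C| + pt(G,C)/(2T) the second term is at most 1/2,
  so it compares solutions lexicographically, first by |C| and then by pt(G,C). Some minimum
  zero forcing set has propagation time PT(G) >= k, so an optimal C is minimum, and no
  minimum zero forcing set has propagation time in the range [k, pt(G,C)).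
*)

theory Submission
  imports Defs
begin

section \<open>Parallel propagation\<close>

definition filled_after :: "'a set \<Rightarrow> ('a \<Rightarrow> 'a \<Rightarrow> bool) \<Rightarrow> 'a set \<Rightarrow> nat \<Rightarrow> 'a set" where
  "filled_after V E C t = (prop_step V E ^^ t) C"

lemma filled_after_0 [simp]: "filled_after V E C 0 = C"
  by (simp add: filled_after_def)

lemma filled_after_Suc [simp]: "filled_after V E C (Suc t) = prop_step V E (filled_after V E C t)"
  by (simp add: filled_after_def)

lemma filled_after_pred:
  "1 \<le> t \<Longrightarrow> filled_after V E C t = prop_step V E (filled_after V E C (t - 1))"
  by (cases t) simp_all

lemma nbhd_subset: "nbhd V E u \<subseteq> V"
  by (auto simp: nbhd_def)

lemma subset_prop_step: "S \<subseteq> prop_step V E S"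
  by (auto simp: prop_step_def)

lemma prop_step_subset: "S \<subseteq> V \<Longrightarrow> prop_step V E S \<subseteq> V"
  using nbhd_subset by (fastforce simp: prop_step_def)

lemma mono_filled_after: "mono (filled_after V E C)"
  unfolding mono_iff_le_Suc by (simp add: subset_prop_step)

lemma filled_after_mono: "s \<le> t \<Longrightarrow> filled_after V E C s \<subseteq> filled_after V E C t"
  using mono_filled_after by (rule monoD)

lemma filled_after_subset: "C \<subseteq> V \<Longrightarrow> filled_after V E C t \<subseteq> V"
  by (induction t) (auto dest: prop_step_subset)

lemma filled_after_stable:
  assumes "s \<le> t" and "filled_after V E C (Suc s) = filled_after V E C s"
  shows "filled_after V E C t = filled_after V E C s"
  using assms by (induction t rule: dec_induct) auto

lemma prop_step_forces:
  assumes "u \<in> S" "v \<in> nbhd V E u" "nbhd V E u - {v} \<subseteq> S"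
  shows "v \<in> prop_step V E S"
  using assms by (cases "v \<in> S") (auto simp: prop_step_def)

lemma prop_step_subset_filled:
  assumes "S \<subseteq> filled V E C"
  shows "prop_step V E S \<subseteq> filled V E C"
proof
  fix v assume "v \<in> prop_step V E S"
  then consider "v \<in> S" | u where "u \<in> S" "v \<in> nbhd V E u" "nbhd V E u - S = {v}"
    by (auto simp: prop_step_def)
  then show "v \<in> filled V E C"
  proof cases
    case 2
    then have "\<forall>w \<in> nbhd V E u - {v}. w \<in> filled V E C" using assms by blast
    then show ?thesis using 2 assms by (blast intro: filled.force)
  qed (use assms in blast)
qed

lemma filled_after_subset_filled: "filled_after V E C t \<subseteq> filled V E C"
  by (induction t) (auto intro: filled.init dest: prop_step_subset_filled)

lemma finite_subset_UN_mono:
  fixes F :: "nat \<Rightarrow> 'a set"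
  assumes "mono F" "finite A" "A \<subseteq> (\<Union>t. F t)"
  shows "\<exists>t. A \<subseteq> F t"
  using assms(2,3)
proof (induction A rule: finite_induct)
  case (insert a A)
  then obtain s t where "a \<in> F s" "A \<subseteq> F t" by blast
  moreover have "F s \<subseteq> F (max s t)" "F t \<subseteq> F (max s t)"
    using \<open>mono F\<close> by (simp_all add: monoD)
  ultimately show ?case by blast
qed simp

lemma filled_eq_UN_filled_after:
  assumes "finite V"
  shows "filled V E C = (\<Union>t. filled_after V E C t)"
proof
  show "filled V E C \<subseteq> (\<Union>t. filled_after V E C t)"
  proof
    fix v assume "v \<in> filled V E C"
    then show "v \<in> (\<Union>t. filled_after V E C t)"
    proof (induction rule: filled.induct)
      case (init v)
      then have "v \<in> filled_after V E C 0" by simp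
      then show ?case by blast
    next
      case (force u v)
      obtain s where s: "u \<in> filled_after V E C s"
        using force(3) by blast
      have "finite (nbhd V E u - {v})"
        using finite_subset[OF nbhd_subset assms] by simp
      moreover have "nbhd V E u - {v} \<subseteq> (\<Union>t. filled_after V E C t)"
        using force(4) by blast
      ultimately obtain t where t: "nbhd V E u - {v} \<subseteq> filled_after V E C t"
        using finite_subset_UN_mono[OF mono_filled_after] by blast
      have "filled_after V E C s \<subseteq> filled_after V E C (max s t)"
        "filled_after V E C t \<subseteq> filled_after V E C (max s t)"
        by (simp_all add: filled_after_mono)
      then have "v \<in> prop_step V E (filled_after V E C (max s t))"
        using s t force(2) by (intro prop_step_forces) auto
      then have "v \<in> filled_after V E C (Suc (max s t))"
        by simp
      then show ?case by blast
    qed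
  qed
next
  show "(\<Union>t. filled_after V E C t) \<subseteq> filled V E C"
    by (rule UN_least) (rule filled_after_subset_filled)
qed

lemma zero_forcing_set_iff_filled_after:
  assumes "finite V"
  shows "zero_forcing_set V E C \<longleftrightarrow> C \<subseteq> V \<and> (\<exists>t. filled_after V E C t = V)"
proof
  assume "zero_forcing_set V E C"
  then have CV: "C \<subseteq> V" and "V \<subseteq> (\<Union>t. filled_after V E C t)"
    using filled_eq_UN_filled_after[OF assms] by (auto simp: zero_forcing_set_def)
  then obtain t where "V \<subseteq> filled_after V E C t"
    using finite_subset_UN_mono[OF mono_filled_after assms] by blast
  then have "filled_after V E C t = V"
    using filled_after_subset[OF CV] by (rule subset_antisym[rotated])
  with CV show "C \<subseteq> V \<and> (\<exists>t. filled_after V E C t = V)" by blast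
next
  assume "C \<subseteq> V \<and> (\<exists>t. filled_after V E C t = V)"
  then obtain t where CV: "C \<subseteq> V" and "filled_after V E C t = V" by blast
  then have "V \<subseteq> filled V E C"
    using filled_after_subset_filled by metis
  moreover have "filled V E C \<subseteq> V"
    using filled_after_subset[OF CV] by (auto simp: filled_eq_UN_filled_after[OF assms])
  ultimately show "zero_forcing_set V E C"
    using CV by (auto simp: zero_forcing_set_def)
qed

section \<open>Propagation time\<close>

lemma Least_eq_iff_nat:
  fixes p :: nat
  assumes "\<exists>t. P t"
  shows "(LEAST t. P t) = p \<longleftrightarrow> P p \<and> (\<forall>t<p. \<not> P t)"
proof
  assume "(LEAST t. P t) = p"
  then show "P p \<and> (\<forall>t<p. \<not> P t)"
    using LeastI_ex[OF assms] not_less_Least by blast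
next
  assume "P p \<and> (\<forall>t<p. \<not> P t)"
  then show "(LEAST t. P t) = p"
    by (intro Least_equality) (auto simp: not_less[symmetric])
qed

lemma prop_time_eq_enat_iff:
  "prop_time V E C = enat p \<longleftrightarrow>
     filled_after V E C p = V \<and> (\<forall>t<p. filled_after V E C t \<noteq> V)"
proof (cases "\<exists>t. filled_after V E C t = V")
  case True
  then have "prop_time V E C = enat (LEAST t. filled_after V E C t = V)"
    by (simp add: prop_time_def filled_after_def)
  then show ?thesis
    using Least_eq_iff_nat[OF True, of p] by simp
next
  case False
  then show ?thesis
    by (simp add: prop_time_def filled_after_def)
qed

lemma prop_time_le:
  assumes "filled_after V E C T = V"
  shows "\<exists>p\<le>T. prop_time V E C = enat p"
proof -
  have "prop_time V E C = enat (LEAST t. filled_after V E C t = V)"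
    using assms by (auto simp: prop_time_def filled_after_def)
  moreover have "(LEAST t. filled_after V E C t = V) \<le> T"
    using assms by (rule Least_le)
  ultimately show ?thesis by blast
qed

lemma filled_after_psubset_Suc:
  assumes "prop_time V E C = enat p" and "t < p"
  shows "filled_after V E C t \<subset> filled_after V E C (Suc t)"
proof -
  have "filled_after V E C (Suc t) \<noteq> filled_after V E C t"
  proof
    assume stuck: "filled_after V E C (Suc t) = filled_after V E C t"
    have "filled_after V E C p = filled_after V E C t"
      using \<open>t < p\<close> stuck by (simp add: filled_after_stable)
    moreover have "filled_after V E C p = V" "filled_after V E C t \<noteq> V"
      using assms unfolding prop_time_eq_enat_iff by blast+
    ultimately show False by simp
  qed
  moreover have "filled_after V E C t \<subseteq> filled_after V E C (Suc t)"
    by (rule filled_after_mono) simp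
  ultimately show ?thesis by blast
qed

lemma filled_after_ge_prop_time:
  assumes "C \<subseteq> V" and "prop_time V E C = enat p" and "p \<le> t"
  shows "filled_after V E C t = V"
proof (rule subset_antisym)
  show "filled_after V E C t \<subseteq> V"
    using assms(1) by (rule filled_after_subset)
  have "filled_after V E C p = V"
    using assms(2) by (simp add: prop_time_eq_enat_iff)
  then show "V \<subseteq> filled_after V E C t"
    using filled_after_mono[OF \<open>p \<le> t\<close>, of V E C] by simp
qed

lemma card_filled_after_ge:
  assumes "finite V" "C \<subseteq> V" and "prop_time V E C = enat p" and "t \<le> p"
  shows "card C + t \<le> card (filled_after V E C t)"
  using \<open>t \<le> p\<close>
proof (induction t)
  case (Suc t)
  have "finite (filled_after V E C (Suc t))"
    using filled_after_subset[OF \<open>C \<subseteq> V\<close>] \<open>finite V\<close> by (rule finite_subset)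
  moreover have "filled_after V E C t \<subset> filled_after V E C (Suc t)"
    using Suc.prems by (intro filled_after_psubset_Suc[OF assms(3)]) simp
  ultimately have "card (filled_after V E C t) < card (filled_after V E C (Suc t))"
    by (rule psubset_card_mono)
  then show ?case
    using Suc by simp
qed simp

lemma prop_time_le_card:
  assumes "finite V" "C \<subseteq> V" "C \<noteq> {}" and "prop_time V E C = enat p"
  shows "p \<le> card V - 1"
proof -
  have "card C + p \<le> card V"
    using card_filled_after_ge[OF assms(1,2,4) order_refl]
      filled_after_ge_prop_time[OF assms(2,4) order_refl] by simp
  moreover have "finite C"
    using assms(2,1) by (rule finite_subset)
  then have "card C \<noteq> 0"
    using \<open>C \<noteq> {}\<close> by simp
  ultimately show ?thesis by linarith
qed

lemma filled_after_empty [simp]: "filled_after V E {} t = {}"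
  by (induction t) (simp_all add: prop_step_def)

lemma zero_forcing_set_prop_time:
  assumes "finite V" and "zero_forcing_set V E C"
  obtains p where "prop_time V E C = enat p" "p \<le> card V - 1"
proof -
  obtain T where CV: "C \<subseteq> V" and T: "filled_after V E C T = V"
    using assms by (auto simp: zero_forcing_set_iff_filled_after)
  then obtain p where p: "prop_time V E C = enat p"
    using prop_time_le by blast
  show ?thesis
  proof (cases "C = {}")
    case True
    then have "filled_after V E C 0 = V"
      using T by simp
    then have "p = 0"
      using p by (auto simp: prop_time_eq_enat_iff)
    then show ?thesis
      using p that by simp
  next
    case False
    then show ?thesis
      using p that prop_time_le_card[OF \<open>finite V\<close> CV] by blast
  qed
qed

lemma changing_steps_eq:
  assumes "C \<subseteq> V" and "prop_time V E C = enat p" and "p \<le> T"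
  shows "{t \<in> {1..T}. filled_after V E C t \<noteq> filled_after V E C (t - 1)} = {1..p}"
proof (intro equalityI subsetI)
  fix t assume t: "t \<in> {t \<in> {1..T}. filled_after V E C t \<noteq> filled_after V E C (t - 1)}"
  have "t \<le> p"
  proof (rule ccontr)
    assume "\<not> t \<le> p"
    then have "filled_after V E C (t - 1) = V" "filled_after V E C t = V"
      using filled_after_ge_prop_time[OF assms(1,2)] by simp_all
    then show False
      using t by simp
  qed
  then show "t \<in> {1..p}"
    using t by simp
next
  fix t assume t: "t \<in> {1..p}"
  then obtain s where s: "t = Suc s" "s < p"
    by (cases t) auto
  then have "filled_after V E C s \<subset> filled_after V E C t"
    using filled_after_psubset_Suc[OF assms(2)] by simp
  then show "t \<in> {t \<in> {1..T}. filled_after V E C t \<noteq> filled_after V E C (t - 1)}"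
    using t s \<open>p \<le> T\<close> by auto
qed

lemma sum_changing_steps:
  assumes "C \<subseteq> V" and "prop_time V E C = enat p" and "p \<le> T"
  shows "(\<Sum>t\<in>{1..T}. of_bool (filled_after V E C t \<noteq> filled_after V E C (t - 1)))
    = (of_nat p :: 'b::semiring_1)"
proof -
  have "(\<Sum>t\<in>{1..T}. of_bool (filled_after V E C t \<noteq> filled_after V E C (t - 1)))
      = (of_nat (card {t \<in> {1..T}. filled_after V E C t \<noteq> filled_after V E C (t - 1)}) :: 'b)"
    by (simp add: Int_def)
  also have "\<dots> = of_nat p"
    by (simp only: changing_steps_eq[OF assms] card_atLeastAtMost) simp
  finally show ?thesis .
qed

section \<open>Solutions of the Time Step Model are propagations\<close>

lemma simple_graph_finite: "simple_graph V E \<Longrightarrow> finite V"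
  by (simp add: simple_graph_def)

lemma simple_graph_sym: "simple_graph V E \<Longrightarrow> E u v \<Longrightarrow> E v u"
  by (simp add: simple_graph_def)

lemma mem_nbhd_iff: "simple_graph V E \<Longrightarrow> w \<in> nbhd V E u \<longleftrightarrow> E u w"
  by (auto simp: simple_graph_def nbhd_def)

lemma mem_nbhd_iff_sym: "simple_graph V E \<Longrightarrow> w \<in> nbhd V E u \<longleftrightarrow> E w u"
  using mem_nbhd_iff simple_graph_sym by metis

lemma finite_nbhd: "simple_graph V E \<Longrightarrow> finite (nbhd V E u)"
  using nbhd_subset simple_graph_finite by (rule finite_subset)

lemma card_nbhd_Diff:
  assumes "simple_graph V E" and "v \<in> nbhd V E u"
  shows "real (card (nbhd V E u - {v})) = real (deg V E u) - 1"
proof -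
  have "card (nbhd V E u) \<noteq> 0"
    using assms finite_nbhd by (metis card_0_eq empty_iff)
  then show ?thesis
    using assms(2) by (simp add: deg_def card_Diff_singleton of_nat_diff)
qed

lemma sum_binary_eq_card:
  assumes "finite A" and "\<And>a. a \<in> A \<Longrightarrow> f a = 0 \<or> f a = 1"
  shows "(\<Sum>a\<in>A. f a) = of_nat (card {a \<in> A. f a = 1})"
proof -
  have "(\<Sum>a\<in>A. f a) = (\<Sum>a\<in>A. of_bool (f a = 1))"
    using assms(2) by (intro sum.cong) auto
  also have "\<dots> = of_nat (card {a \<in> A. f a = 1})"
    using assms(1) by (simp add: Int_def)
  finally show ?thesis .
qed

locale TSM_solution =
  fixes V :: "'a set" and E :: "'a \<Rightarrow> 'a \<Rightarrow> bool" and T :: nat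
    and x :: "'a \<Rightarrow> nat \<Rightarrow> real" and y :: "'a \<times> 'a \<Rightarrow> nat \<Rightarrow> real" and z :: "nat \<Rightarrow> real"
  assumes graph: "simple_graph V E" and TSM: "TSM V E T x y z"
begin

lemma x_binary: "v \<in> V \<Longrightarrow> t \<le> T \<Longrightarrow> x v t = 0 \<or> x v t = 1"
  and y_binary: "E u v \<Longrightarrow> t \<in> {1..T} \<Longrightarrow> y (u, v) t = 0 \<or> y (u, v) t = 1"
  and z_binary: "t \<in> {1..T} \<Longrightarrow> z t = 0 \<or> z t = 1"
  and filled_once: "v \<in> V \<Longrightarrow> x v 0 + (\<Sum>t\<in>{1..T}. \<Sum>u\<in>nbhd V E v. y (u, v) t) = 1"
  and forcer_filled: "E u v \<Longrightarrow> t \<in> {1..T} \<Longrightarrow> y (u, v) t \<le> x u (t - 1)"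
  and forcer_others_filled:
    "E u v \<Longrightarrow> w \<in> nbhd V E u - {v} \<Longrightarrow> t \<in> {1..T} \<Longrightarrow> y (u, v) t \<le> x w (t - 1)"
  and x_update: "v \<in> V \<Longrightarrow> t \<in> {1..T} \<Longrightarrow> x v t = x v (t - 1) + (\<Sum>u\<in>nbhd V E v. y (u, v) t)"
  and force_enabled: "E u v \<Longrightarrow> t \<in> {1..T} \<Longrightarrow>
      x u (t - 1) - x v (t - 1) + (\<Sum>w\<in>nbhd V E u - {v}. x w (t - 1))
        \<le> (\<Sum>w\<in>nbhd V E v. y (w, v) t) + real (deg V E u) - 1"
  and z_lower: "t \<in> {1..T} \<Longrightarrow> (1 / real (card V)) * (\<Sum>v\<in>V. x v t - x v (t - 1)) \<le> z t"
  and z_upper: "t \<in> {1..T} \<Longrightarrow> z t \<le> (\<Sum>v\<in>V. x v t - x v (t - 1))"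
  using TSM unfolding TSM_def by auto

abbreviation filled_set :: "nat \<Rightarrow> 'a set" where
  "filled_set t \<equiv> {v \<in> V. x v t = 1}"

lemma sum_y_nonneg:
  assumes "t \<in> {1..T}"
  shows "0 \<le> (\<Sum>u\<in>nbhd V E v. y (u, v) t)"
proof (rule sum_nonneg)
  fix u assume "u \<in> nbhd V E v"
  then have "E u v"
    using graph by (simp add: mem_nbhd_iff_sym)
  then show "0 \<le> y (u, v) t"
    using y_binary[OF _ assms] by force
qed

lemma stays_filled:
  assumes "v \<in> V" "t \<in> {1..T}" and "x v (t - 1) = 1"
  shows "x v t = 1"
proof -
  have "1 \<le> x v t"
    using x_update[OF assms(1,2)] sum_y_nonneg[OF assms(2)] assms(3) by simp
  then show ?thesis
    using x_binary[OF assms(1), of t] assms(2) by auto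
qed

lemma newly_filled_forced:
  assumes "v \<in> V" "t \<in> {1..T}" and "x v t = 1" "x v (t - 1) \<noteq> 1"
  obtains u where "u \<in> filled_set (t - 1)" "v \<in> nbhd V E u" "nbhd V E u - filled_set (t - 1) = {v}"
proof -
  have "x v (t - 1) = 0"
    using x_binary[OF assms(1), of "t - 1"] assms(2,4) by auto
  then have "(\<Sum>u\<in>nbhd V E v. y (u, v) t) \<noteq> 0"
    using x_update[OF assms(1,2)] assms(3) by simp
  then obtain u where "u \<in> nbhd V E v" and "y (u, v) t \<noteq> 0"
    by (rule sum.not_neutral_contains_not_neutral)
  then have Euv: "E u v"
    using graph by (simp add: mem_nbhd_iff_sym)
  then have y1: "y (u, v) t = 1"
    using y_binary[OF _ assms(2)] \<open>y (u, v) t \<noteq> 0\<close> by blast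
  have filled_before: "w \<in> filled_set (t - 1)" if "w \<in> nbhd V E u - {v}" for w
  proof -
    have "w \<in> V" using that nbhd_subset[of V E u] by blast
    moreover have "1 \<le> x w (t - 1)"
      using forcer_others_filled[OF Euv that assms(2)] y1 by simp
    ultimately show ?thesis
      using x_binary[of w "t - 1"] assms(2) by auto
  qed
  have "u \<in> V" and "1 \<le> x u (t - 1)"
    using forcer_filled[OF Euv assms(2)] y1 graph Euv by (auto simp: simple_graph_def)
  then have "u \<in> filled_set (t - 1)"
    using x_binary[of u "t - 1"] assms(2) by auto
  moreover have "v \<in> nbhd V E u"
    using Euv graph by (simp add: mem_nbhd_iff)
  moreover have "nbhd V E u - filled_set (t - 1) = {v}"
    using filled_before \<open>v \<in> nbhd V E u\<close> assms(4) by blast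
  ultimately show ?thesis by (rule that)
qed

lemma forced_becomes_filled:
  assumes "t \<in> {1..T}" and "u \<in> filled_set (t - 1)" "v \<in> nbhd V E u"
    and "nbhd V E u - filled_set (t - 1) = {v}"
  shows "x v t = 1"
proof -
  have Euv: "E u v"
    using assms(3) graph by (simp add: mem_nbhd_iff)
  have vV: "v \<in> V"
    using assms(3) nbhd_subset[of V E u] by blast
  have "v \<notin> filled_set (t - 1)"
    using assms(4) by blast
  then have v0: "x v (t - 1) = 0"
    using x_binary[OF vV, of "t - 1"] vV assms(1) by auto
  have "x w (t - 1) = 1" if "w \<in> nbhd V E u - {v}" for w
    using that assms(4) by blast
  then have "(\<Sum>w\<in>nbhd V E u - {v}. x w (t - 1)) = (\<Sum>w\<in>nbhd V E u - {v}. 1)"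
    by (rule sum.cong[OF refl])
  also have "\<dots> = real (deg V E u) - 1"
    using card_nbhd_Diff[OF graph assms(3)] by simp
  finally have "1 \<le> (\<Sum>w\<in>nbhd V E v. y (w, v) t)"
    using force_enabled[OF Euv assms(1)] assms(2) v0 by simp
  then have "1 \<le> x v t"
    using x_update[OF vV assms(1)] v0 by linarith
  then show ?thesis
    using x_binary[OF vV, of t] assms(1) by auto
qed

lemma filled_set_step:
  assumes "t \<in> {1..T}"
  shows "filled_set t = prop_step V E (filled_set (t - 1))"
proof (intro equalityI subsetI)
  fix v assume v: "v \<in> filled_set t"
  show "v \<in> prop_step V E (filled_set (t - 1))"
  proof (cases "x v (t - 1) = 1")
    case False
    then obtain u where "u \<in> filled_set (t - 1)" "v \<in> nbhd V E u"
      "nbhd V E u - filled_set (t - 1) = {v}"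
      using newly_filled_forced[OF _ assms] v by blast
    then show ?thesis
      unfolding prop_step_def by blast
  qed (use v in \<open>simp add: prop_step_def\<close>)
next
  fix v assume v: "v \<in> prop_step V E (filled_set (t - 1))"
  then have "v \<in> V"
    using prop_step_subset[of "filled_set (t - 1)" V] by blast
  from v consider "v \<in> filled_set (t - 1)"
    | u where "u \<in> filled_set (t - 1)" "v \<in> nbhd V E u" "nbhd V E u - filled_set (t - 1) = {v}"
    unfolding prop_step_def by blast
  then show "v \<in> filled_set t"
  proof cases
    case 1
    then show ?thesis
      using stays_filled[OF _ assms] by blast
  next
    case 2
    then show ?thesis
      using forced_becomes_filled[OF assms] \<open>v \<in> V\<close> by blast
  qed
qed

lemma filled_after_filled_set_0: "t \<le> T \<Longrightarrow> filled_after V E (filled_set 0) t = filled_set t"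
proof (induction t)
  case (Suc t)
  then show ?case
    using filled_set_step[of "Suc t"] by simp
qed simp

lemma x_telescope:
  assumes "v \<in> V" and "t \<le> T"
  shows "x v t = x v 0 + (\<Sum>s\<in>{1..t}. \<Sum>u\<in>nbhd V E v. y (u, v) s)"
  using assms(2)
proof (induction t)
  case (Suc t)
  then show ?case
    using x_update[OF assms(1), of "Suc t"] by simp
qed simp

lemma filled_set_final: "filled_set T = V"
  using x_telescope[OF _ order_refl] filled_once by auto

lemma filled_set_mono:
  assumes "t \<in> {1..T}"
  shows "filled_set (t - 1) \<subseteq> filled_set t"
  using stays_filled[OF _ assms] by auto

lemma sum_x_eq_card:
  assumes "t \<le> T"
  shows "(\<Sum>v\<in>V. x v t) = real (card (filled_set t))"
  using sum_binary_eq_card[OF simple_graph_finite[OF graph], of "\<lambda>v. x v t"] x_binary[OF _ assms]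
  by simp

lemma z_eq:
  assumes "t \<in> {1..T}"
  shows "z t = of_bool (filled_set t \<noteq> filled_set (t - 1))"
proof -
  have finV: "finite V"
    using graph by (rule simple_graph_finite)
  have "t \<le> T" "t - 1 \<le> T"
    using assms by auto
  then have diff: "(\<Sum>v\<in>V. x v t - x v (t - 1))
      = real (card (filled_set t)) - real (card (filled_set (t - 1)))"
    by (simp add: sum_subtractf sum_x_eq_card)
  show ?thesis
  proof (cases "filled_set t = filled_set (t - 1)")
    case True
    then show ?thesis
      using z_upper[OF assms] z_binary[OF assms] diff by auto
  next
    case False
    have "card (filled_set (t - 1)) < card (filled_set t)"
      using filled_set_mono[OF assms] False finV by (intro psubset_card_mono) auto
    moreover have "card (filled_set t) \<le> card V"
      using finV by (intro card_mono) auto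
    ultimately have "0 < (1 / real (card V)) * (\<Sum>v\<in>V. x v t - x v (t - 1))"
      using diff by simp
    then show ?thesis
      using z_lower[OF assms] z_binary[OF assms] False by auto
  qed
qed

lemma zero_forcing_set_filled_set_0: "zero_forcing_set V E (filled_set 0)"
proof -
  have "filled_after V E (filled_set 0) T = V"
    using filled_after_filled_set_0[OF order_refl] filled_set_final by simp
  then show ?thesis
    using zero_forcing_set_iff_filled_after[OF simple_graph_finite[OF graph]] by blast
qed

lemma prop_time_filled_set_0:
  obtains p where "p \<le> T" "prop_time V E (filled_set 0) = enat p" "(\<Sum>t\<in>{1..T}. z t) = real p"
proof -
  let ?C = "filled_set 0"
  have "filled_after V E ?C T = V"
    using filled_after_filled_set_0[OF order_refl] filled_set_final by simp
  then obtain p where p: "p \<le> T" "prop_time V E ?C = enat p"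
    using prop_time_le by blast
  have "(\<Sum>t\<in>{1..T}. z t) = (\<Sum>t\<in>{1..T}. of_bool (filled_set t \<noteq> filled_set (t - 1)))"
    using z_eq by (rule sum.cong[OF refl])
  also have "\<dots> = (\<Sum>t\<in>{1..T}. of_bool (filled_after V E ?C t \<noteq> filled_after V E ?C (t - 1)))"
  proof (rule sum.cong[OF refl])
    fix t assume "t \<in> {1..T}"
    then have "t \<le> T" "t - 1 \<le> T" by auto
    then show "of_bool (filled_set t \<noteq> filled_set (t - 1))
        = (of_bool (filled_after V E ?C t \<noteq> filled_after V E ?C (t - 1)) :: real)"
      by (simp add: filled_after_filled_set_0)
  qed
  also have "\<dots> = real p"
    by (rule sum_changing_steps[OF _ p(2,1)]) blast
  finally show ?thesis
    using p that by blast
qed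

end

section \<open>Propagations are solutions of the Time Step Model\<close>

definition newly_filled :: "'a set \<Rightarrow> ('a \<Rightarrow> 'a \<Rightarrow> bool) \<Rightarrow> 'a set \<Rightarrow> nat \<Rightarrow> 'a set" where
  "newly_filled V E C t = filled_after V E C t - filled_after V E C (t - 1)"

definition forcer :: "'a set \<Rightarrow> ('a \<Rightarrow> 'a \<Rightarrow> bool) \<Rightarrow> 'a set \<Rightarrow> nat \<Rightarrow> 'a \<Rightarrow> 'a" where
  "forcer V E C t v = (SOME u. u \<in> filled_after V E C (t - 1) \<and> v \<in> nbhd V E u
     \<and> nbhd V E u - filled_after V E C (t - 1) = {v})"

definition trace_x :: "'a set \<Rightarrow> ('a \<Rightarrow> 'a \<Rightarrow> bool) \<Rightarrow> 'a set \<Rightarrow> 'a \<Rightarrow> nat \<Rightarrow> real" where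
  "trace_x V E C v t = of_bool (v \<in> filled_after V E C t)"

definition trace_y :: "'a set \<Rightarrow> ('a \<Rightarrow> 'a \<Rightarrow> bool) \<Rightarrow> 'a set \<Rightarrow> 'a \<times> 'a \<Rightarrow> nat \<Rightarrow> real" where
  "trace_y V E C a t = of_bool (snd a \<in> newly_filled V E C t \<and> fst a = forcer V E C t (snd a))"

definition trace_z :: "'a set \<Rightarrow> ('a \<Rightarrow> 'a \<Rightarrow> bool) \<Rightarrow> 'a set \<Rightarrow> nat \<Rightarrow> real" where
  "trace_z V E C t = of_bool (filled_after V E C t \<noteq> filled_after V E C (t - 1))"

lemma forcer_forces:
  assumes "1 \<le> t" and "v \<in> newly_filled V E C t"
  shows "forcer V E C t v \<in> filled_after V E C (t - 1)"
    and "v \<in> nbhd V E (forcer V E C t v)"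
    and "nbhd V E (forcer V E C t v) - filled_after V E C (t - 1) = {v}"
proof -
  have "\<exists>u. u \<in> filled_after V E C (t - 1) \<and> v \<in> nbhd V E u
      \<and> nbhd V E u - filled_after V E C (t - 1) = {v}"
    using assms filled_after_pred[OF assms(1), of V E C]
    by (auto simp: newly_filled_def prop_step_def)
  then have "forcer V E C t v \<in> filled_after V E C (t - 1) \<and> v \<in> nbhd V E (forcer V E C t v)
      \<and> nbhd V E (forcer V E C t v) - filled_after V E C (t - 1) = {v}"
    unfolding forcer_def by (rule someI_ex)
  then show "forcer V E C t v \<in> filled_after V E C (t - 1)"
    and "v \<in> nbhd V E (forcer V E C t v)"
    and "nbhd V E (forcer V E C t v) - filled_after V E C (t - 1) = {v}"
    by blast+
qed

lemma sum_trace_y: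
  assumes "simple_graph V E" and "1 \<le> t"
  shows "(\<Sum>u\<in>nbhd V E v. trace_y V E C (u, v) t) = of_bool (v \<in> newly_filled V E C t)"
proof (cases "v \<in> newly_filled V E C t")
  case True
  let ?u = "forcer V E C t v"
  have "E ?u v"
    using forcer_forces(2)[OF assms(2) True] assms(1) by (simp add: mem_nbhd_iff)
  then have "?u \<in> nbhd V E v"
    using assms(1) by (simp add: mem_nbhd_iff_sym)
  then have "nbhd V E v \<inter> {u. u = ?u} = {?u}"
    by blast
  moreover have "(\<Sum>u\<in>nbhd V E v. trace_y V E C (u, v) t)
      = real (card (nbhd V E v \<inter> {u. u = ?u}))"
    using True finite_nbhd[OF assms(1)] by (simp add: trace_y_def)
  ultimately show ?thesis
    using True by simp
qed (simp add: trace_y_def)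

lemma trace_x_Suc:
  "1 \<le> t \<Longrightarrow> trace_x V E C v t = trace_x V E C v (t - 1) + of_bool (v \<in> newly_filled V E C t)"
  using filled_after_mono[of "t - 1" t V E C] by (auto simp: trace_x_def newly_filled_def)

lemma trace_x_telescope:
  "trace_x V E C v 0 + (\<Sum>s\<in>{1..t}. of_bool (v \<in> newly_filled V E C s)) = trace_x V E C v t"
proof (induction t)
  case (Suc t)
  then show ?case
    using trace_x_Suc[of "Suc t" V E C v] by simp
qed simp

lemma sum_trace_x:
  assumes "finite V" "C \<subseteq> V"
  shows "(\<Sum>v\<in>V. trace_x V E C v t) = real (card (filled_after V E C t))"
proof -
  have "V \<inter> {v. v \<in> filled_after V E C t} = filled_after V E C t"
    using filled_after_subset[OF assms(2), of E t] by blast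
  then show ?thesis
    using assms(1) by (simp add: trace_x_def)
qed

lemma trace_force_enabled:
  assumes G: "simple_graph V E" and "E u v" and "1 \<le> t"
  shows "trace_x V E C u (t - 1) - trace_x V E C v (t - 1)
      + (\<Sum>w\<in>nbhd V E u - {v}. trace_x V E C w (t - 1))
    \<le> (\<Sum>w\<in>nbhd V E v. trace_y V E C (w, v) t) + real (deg V E u) - 1"
proof -
  let ?S = "filled_after V E C (t - 1)" and ?A = "nbhd V E u - {v}"
  have vu: "v \<in> nbhd V E u"
    using G \<open>E u v\<close> by (simp add: mem_nbhd_iff)
  have finA: "finite ?A"
    using finite_nbhd[OF G] by simp
  have sumA: "(\<Sum>w\<in>?A. trace_x V E C w (t - 1)) = real (card (?A \<inter> ?S))"
    using finA by (simp add: trace_x_def Int_def)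
  have degA: "real (deg V E u) - 1 = real (card ?A)"
    using card_nbhd_Diff[OF G vu] by simp
  have rhs: "(\<Sum>w\<in>nbhd V E v. trace_y V E C (w, v) t) = of_bool (v \<in> newly_filled V E C t)"
    using sum_trace_y[OF G \<open>1 \<le> t\<close>] .
  consider "u \<in> ?S" "v \<notin> ?S" "?A \<subseteq> ?S" | "\<not> (u \<in> ?S \<and> v \<notin> ?S)" "?A \<subseteq> ?S" | "\<not> ?A \<subseteq> ?S"
    by blast
  then show ?thesis
  proof cases
    case 1
    then have "v \<in> prop_step V E ?S"
      using vu by (intro prop_step_forces) auto
    then have "v \<in> newly_filled V E C t"
      using 1 filled_after_pred[OF \<open>1 \<le> t\<close>, of V E C] by (simp add: newly_filled_def)
    moreover have "?A \<inter> ?S = ?A"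
      using 1 by blast
    ultimately show ?thesis
      using 1 sumA degA rhs by (simp add: trace_x_def)
  next
    case 2
    then have "?A \<inter> ?S = ?A"
      by blast
    then show ?thesis
      using 2 sumA degA rhs by (auto simp: trace_x_def)
  next
    case 3
    then have "card (?A \<inter> ?S) < card ?A"
      using finA by (intro psubset_card_mono) auto
    then show ?thesis
      using sumA degA rhs by (simp add: trace_x_def)
  qed
qed

lemma sum_trace_x_diff:
  assumes "finite V" "C \<subseteq> V"
  shows "(\<Sum>v\<in>V. trace_x V E C v t - trace_x V E C v (t - 1))
    = real (card (filled_after V E C t)) - real (card (filled_after V E C (t - 1)))"
  using sum_trace_x[OF assms] by (simp add: sum_subtractf)

lemma trace_z_bounds:
  fixes E :: "'a \<Rightarrow> 'a \<Rightarrow> bool" and t :: nat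
  assumes "finite V" "C \<subseteq> V"
  defines "d \<equiv> (\<Sum>v\<in>V. trace_x V E C v t - trace_x V E C v (t - 1))"
  shows "(1 / real (card V)) * d \<le> trace_z V E C t" and "trace_z V E C t \<le> d"
proof -
  let ?F = "filled_after V E C"
  have fin: "finite (?F t)"
    using filled_after_subset[OF assms(2)] assms(1) by (rule finite_subset)
  have sub: "?F (t - 1) \<subseteq> ?F t"
    by (rule filled_after_mono) simp
  have d: "d = real (card (?F t)) - real (card (?F (t - 1)))"
    unfolding d_def by (rule sum_trace_x_diff[OF assms(1,2)])
  have "card (?F t) \<le> card V"
    using filled_after_subset[OF assms(2)] assms(1) by (rule card_mono[rotated])
  then have "(1 / real (card V)) * d \<le> 1"
    using d by (cases "card V = 0") (simp_all add: field_simps)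
  have "(1 / real (card V)) * d \<le> trace_z V E C t \<and> trace_z V E C t \<le> d"
  proof (cases "?F t = ?F (t - 1)")
    case False
    then have "card (?F (t - 1)) < card (?F t)"
      using fin sub by (intro psubset_card_mono) auto
    then show ?thesis
      using False d \<open>(1 / real (card V)) * d \<le> 1\<close> by (simp add: trace_z_def)
  qed (simp add: d trace_z_def)
  then show "(1 / real (card V)) * d \<le> trace_z V E C t" and "trace_z V E C t \<le> d"
    by simp_all
qed

lemma TSM_trace:
  assumes G: "simple_graph V E" and CV: "C \<subseteq> V" and final: "filled_after V E C T = V"
  shows "TSM V E T (trace_x V E C) (trace_y V E C) (trace_z V E C)"
proof -
  let ?x = "trace_x V E C" and ?y = "trace_y V E C" and ?z = "trace_z V E C"
  have finV: "finite V"
    using G by (rule simple_graph_finite)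
  have binary: "\<forall>v \<in> V. \<forall>t \<le> T. ?x v t \<in> {0, 1}"
    "\<forall>u v. E u v \<longrightarrow> (\<forall>t \<in> {1..T}. ?y (u, v) t \<in> {0, 1})"
    "\<forall>t \<in> {1..T}. ?z t \<in> {0, 1}"
    by (simp_all add: trace_x_def trace_y_def trace_z_def)
  have filled_once: "\<forall>v \<in> V. ?x v 0 + (\<Sum>t\<in>{1..T}. \<Sum>u\<in>nbhd V E v. ?y (u, v) t) = 1"
  proof
    fix v assume "v \<in> V"
    have "(\<Sum>t\<in>{1..T}. \<Sum>u\<in>nbhd V E v. ?y (u, v) t) = (\<Sum>t\<in>{1..T}. of_bool (v \<in> newly_filled V E C t))"
      using sum_trace_y[OF G] by (intro sum.cong) auto
    then show "?x v 0 + (\<Sum>t\<in>{1..T}. \<Sum>u\<in>nbhd V E v. ?y (u, v) t) = 1"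
      using trace_x_telescope[of V E C v T] final \<open>v \<in> V\<close> by (simp add: trace_x_def)
  qed
  have forcer_filled: "\<forall>u v. E u v \<longrightarrow> (\<forall>t \<in> {1..T}. ?y (u, v) t \<le> ?x u (t - 1))"
    using forcer_forces(1) by (auto simp: trace_x_def trace_y_def)
  have forcer_others_filled:
    "\<forall>u v. E u v \<longrightarrow> (\<forall>w \<in> nbhd V E u - {v}. \<forall>t \<in> {1..T}. ?y (u, v) t \<le> ?x w (t - 1))"
    using forcer_forces(3) by (fastforce simp: trace_x_def trace_y_def)
  have update: "\<forall>v \<in> V. \<forall>t \<in> {1..T}. ?x v t = ?x v (t - 1) + (\<Sum>u\<in>nbhd V E v. ?y (u, v) t)"
  proof (intro ballI)
    fix v t assume "t \<in> {1..T}"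
    then have "1 \<le> t" by simp
    then show "?x v t = ?x v (t - 1) + (\<Sum>u\<in>nbhd V E v. ?y (u, v) t)"
      using trace_x_Suc[of t V E C v] sum_trace_y[OF G] by simp
  qed
  have force_enabled: "\<forall>u v. E u v \<longrightarrow> (\<forall>t \<in> {1..T}.
      ?x u (t - 1) - ?x v (t - 1) + (\<Sum>w\<in>nbhd V E u - {v}. ?x w (t - 1))
        \<le> (\<Sum>w\<in>nbhd V E v. ?y (w, v) t) + real (deg V E u) - 1)"
    using trace_force_enabled[OF G] by simp
  have z_bounds: "\<forall>t \<in> {1..T}. (1 / real (card V)) * (\<Sum>v\<in>V. ?x v t - ?x v (t - 1)) - ?z t \<le> 0"
    "\<forall>t \<in> {1..T}. ?z t - (\<Sum>v\<in>V. ?x v t - ?x v (t - 1)) \<le> 0"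
    using trace_z_bounds[OF finV CV] by simp_all
  show ?thesis
    unfolding TSM_def
    by (intro conjI binary filled_once forcer_filled forcer_others_filled update force_enabled z_bounds)
qed

lemma sum_trace_x_0: "finite V \<Longrightarrow> C \<subseteq> V \<Longrightarrow> (\<Sum>v\<in>V. trace_x V E C v 0) = real (card C)"
  using sum_trace_x[of V C E 0] by simp

lemma sum_trace_z:
  assumes "C \<subseteq> V" and "prop_time V E C = enat p" and "p \<le> T"
  shows "(\<Sum>t\<in>{1..T}. trace_z V E C t) = real p"
  unfolding trace_z_def by (rule sum_changing_steps[OF assms])

section \<open>Optimal solutions\<close>

lemma add_divide_le_lex:
  fixes a b p q T :: nat
  assumes "p \<le> T" "q \<le> T" and le: "real a + real p / (2 * real T) \<le> real b + real q / (2 * real T)"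
  shows "a \<le> b" and "a = b \<Longrightarrow> p \<le> q"
proof -
  have "real q / (2 * real T) \<le> 1 / 2"
    using \<open>q \<le> T\<close> by (cases "T = 0") (simp_all add: field_simps)
  moreover have "0 \<le> real p / (2 * real T)"
    by simp
  ultimately have "real a < real b + 1"
    using le by linarith
  then show "a \<le> b"
    by simp
  assume "a = b"
  then have "real p / (2 * real T) \<le> real q / (2 * real T)"
    using le by simp
  then show "p \<le> q"
    using \<open>p \<le> T\<close> by (cases "T = 0") (simp_all add: divide_right_mono_neg divide_le_cancel)
qed

lemma min_zero_forcing_set_exists:
  assumes "finite V"
  obtains D where "min_zero_forcing_set V E D"
proof -
  have "zero_forcing_set V E V"
    unfolding zero_forcing_set_iff_filled_after[OF assms] by (intro conjI exI[of _ 0]) simp_all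
  then obtain D where "zero_forcing_set V E D \<and> (\<forall>D'. zero_forcing_set V E D' \<longrightarrow> card D \<le> card D')"
    using ex_has_least_nat[of "zero_forcing_set V E" V card] by blast
  then show ?thesis
    using that by (simp add: min_zero_forcing_set_def)
qed

lemma PT_attained:
  assumes "finite V"
  obtains D where "min_zero_forcing_set V E D" "prop_time V E D = PT V E"
proof -
  let ?M = "{D. min_zero_forcing_set V E D}"
  have "?M \<subseteq> Pow V"
    unfolding min_zero_forcing_set_def zero_forcing_set_def by blast
  moreover have "finite (Pow V)"
    using assms by simp
  ultimately have "finite ?M"
    by (rule finite_subset)
  obtain D0 where "min_zero_forcing_set V E D0"
    using min_zero_forcing_set_exists[OF assms] .
  then have "?M \<noteq> {}"
    by blast
  have "Max (prop_time V E ` ?M) \<in> prop_time V E ` ?M"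
    using \<open>finite ?M\<close> \<open>?M \<noteq> {}\<close> by (intro Max_in) simp_all
  moreover have "PT V E = Max (prop_time V E ` ?M)"
    unfolding PT_def using \<open>finite ?M\<close> \<open>?M \<noteq> {}\<close> by (intro cSup_eq_Max) simp_all
  ultimately have "PT V E \<in> prop_time V E ` ?M"
    by simp
  then obtain D where "min_zero_forcing_set V E D" "PT V E = prop_time V E D"
    by blast
  then show ?thesis
    using that by simp
qed

lemma min_zero_forcing_set_prop_time_ge:
  assumes "finite V" and "k \<le> 0 \<or> enat (nat k) \<le> PT V E"
  obtains D q where "min_zero_forcing_set V E D" "prop_time V E D = enat q" "k \<le> int q"
proof -
  obtain D where D: "min_zero_forcing_set V E D" "prop_time V E D = PT V E"
    using PT_attained[OF assms(1)] .
  moreover have "zero_forcing_set V E D"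
    using D(1) by (simp add: min_zero_forcing_set_def)
  then obtain q where "prop_time V E D = enat q"
    using zero_forcing_set_prop_time[OF assms(1)] by blast
  moreover from this have "k \<le> int q"
    using assms(2) D(2) by auto
  ultimately show ?thesis
    using that by blast
qed

lemma trace_of_zero_forcing_set:
  assumes "simple_graph V E" and "zero_forcing_set V E D" and "prop_time V E D = enat q" "q \<le> T"
  shows "TSM V E T (trace_x V E D) (trace_y V E D) (trace_z V E D)"
    and "TSM_obj V T (trace_x V E D) (trace_z V E D) = real (card D) + real q / (2 * real T)"
proof -
  have DV: "D \<subseteq> V"
    using assms(2) by (simp add: zero_forcing_set_def)
  show "TSM V E T (trace_x V E D) (trace_y V E D) (trace_z V E D)"
    using TSM_trace[OF assms(1) DV filled_after_ge_prop_time[OF DV assms(3,4)]] .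
  show "TSM_obj V T (trace_x V E D) (trace_z V E D) = real (card D) + real q / (2 * real T)"
    using sum_trace_x_0[OF simple_graph_finite[OF assms(1)] DV] sum_trace_z[OF DV assms(3,4)]
    by (simp add: TSM_obj_def)
qed

locale TSM_k_optimum = TSM_solution +
  fixes k :: int
  assumes T_eq: "T = card V - 1"
    and sum_z_ge: "real_of_int k \<le> (\<Sum>t\<in>{1..T}. z t)"
    and optimal: "\<forall>x' y' z'. TSM_k V E T k x' y' z' \<longrightarrow> TSM_obj V T x z \<le> TSM_obj V T x' z'"
begin

lemma TSM_obj_eq:
  assumes "(\<Sum>t\<in>{1..T}. z t) = real p"
  shows "TSM_obj V T x z = real (card (filled_set 0)) + real p / (2 * real T)"
  using sum_x_eq_card[of 0] assms by (simp add: TSM_obj_def)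

lemma initial_set_lex_minimal:
  assumes C: "(\<Sum>t\<in>{1..T}. z t) = real p" "p \<le> T"
    and D: "zero_forcing_set V E D" "prop_time V E D = enat q" and "k \<le> int q"
  shows "card (filled_set 0) \<le> card D" and "card (filled_set 0) = card D \<Longrightarrow> p \<le> q"
proof -
  obtain q' where "prop_time V E D = enat q'" "q' \<le> card V - 1"
    using zero_forcing_set_prop_time[OF simple_graph_finite[OF graph] D(1)] .
  then have "q \<le> T"
    using D(2) T_eq by simp
  have "TSM_k V E T k (trace_x V E D) (trace_y V E D) (trace_z V E D)"
    using trace_of_zero_forcing_set(1)[OF graph D \<open>q \<le> T\<close>] sum_trace_z[OF _ D(2) \<open>q \<le> T\<close>] D(1) \<open>k \<le> int q\<close>
    by (simp add: TSM_k_def zero_forcing_set_def)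
  then have "real (card (filled_set 0)) + real p / (2 * real T) \<le> real (card D) + real q / (2 * real T)"
    using optimal trace_of_zero_forcing_set(2)[OF graph D \<open>q \<le> T\<close>] TSM_obj_eq[OF C(1)] by metis
  then show "card (filled_set 0) \<le> card D" and "card (filled_set 0) = card D \<Longrightarrow> p \<le> q"
    using add_divide_le_lex[OF C(2) \<open>q \<le> T\<close>] by blast+
qed

end

theorem corollary4p8:
  fixes V :: "'a set" and E :: "'a \<Rightarrow> 'a \<Rightarrow> bool" and k :: int
    and x :: "'a \<Rightarrow> nat \<Rightarrow> real" and y :: "'a \<times> 'a \<Rightarrow> nat \<Rightarrow> real" and z :: "nat \<Rightarrow> real"
  assumes G: "simple_graph V E" and ne: "V \<noteq> {}"
    and Tdef: "T = card V - 1"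
    and kPT: "k \<le> 0 \<or> enat (nat k) \<le> PT V E"
    and feas: "TSM_k V E T k x y z"
    and opt: "\<forall>x' y' z'. TSM_k V E T k x' y' z' \<longrightarrow> TSM_obj V T x z \<le> TSM_obj V T x' z'"
  defines "C \<equiv> {v \<in> V. x v 0 = 1}"
  shows "min_zero_forcing_set V E C \<and>
         (\<exists>m::nat. prop_time V E C = enat m \<and> real m = (\<Sum>t\<in>{1..T}. z t) \<and> int m \<ge> k \<and>
            \<not> (\<exists>C'. min_zero_forcing_set V E C' \<and>
                   (\<exists>m'. prop_time V E C' = enat m' \<and> k < int m' \<and> m' < m)))"
proof -
  interpret TSM_k_optimum V E T x y z k
    using G feas Tdef opt by unfold_locales (simp_all add: TSM_k_def)
  obtain p where p: "p \<le> T" "prop_time V E C = enat p" "(\<Sum>t\<in>{1..T}. z t) = real p"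
    using prop_time_filled_set_0 unfolding C_def .
  note lex = initial_set_lex_minimal[OF p(3,1)]
  obtain D q where D: "min_zero_forcing_set V E D" "prop_time V E D = enat q" "k \<le> int q"
    using min_zero_forcing_set_prop_time_ge[OF simple_graph_finite[OF G] kPT] .
  have "card C \<le> card D"
    using lex(1)[OF _ D(2,3)] D(1) by (simp add: min_zero_forcing_set_def C_def)
  then have min_C: "min_zero_forcing_set V E C"
    using zero_forcing_set_filled_set_0 D(1) unfolding C_def min_zero_forcing_set_def by fastforce
  have "p \<le> m'"
    if "min_zero_forcing_set V E C'" "prop_time V E C' = enat m'" "k < int m'" for C' m'
    using lex(2)[of C' m'] that min_C by (fastforce simp: min_zero_forcing_set_def C_def)
  moreover have "k \<le> int p"
    using sum_z_ge p(3) by simp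
  ultimately show ?thesis
    using min_C p by (metis not_le)
qed

end
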